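(* Let $v\in\mathrm{Box}(\Sigma)$ and let $\log_1,\dots,\log_n$ be arbitrary branches of the logarithm on the discs $B^v_1,\dots,B^v_n$. For $U\subset\mathbb C^n$ an open simply connected domain and $z\in U$, consider $\varphi(z,r)=\prod_{j=1}^n\frac{z_j^{\frac1{2\pi i}\log_jr_j}}{\Gamma(\frac1{2\pi i}\log_jr_j+1)}$, analytic on $U\times B^v$. Then the linear operator $\varphi(z,\mathcal R):(K_0(\mathbb P_\Sigma,\mathbb C))_v\to(K_0(\mathbb P_\Sigma,\mathbb C))_v$ is zero unless there exists a cone $\sigma\in\Sigma$ with $\sigma(v)\subset\sigma$ whose rays contain all $v_j\in\mathcal A$ for which $\frac1{2\pi i}\log_jy^v_j$ is not a nonnegative integer.
   Context: $N\cong\mathbb Z^d$, $M=\mathrm{Hom}(N,\mathbb Z)$, $\mathcal A=\{v_1,\dots,v_n\}\subset N$ generating $N$ with a homomorphism $\mathrm h:N\to\mathbb Z$, $\mathrm h(v_j)=1$; $\Sigma$ the simplicial fan supported on $\mathbb R_{\ge0}\mathrm{Conv}(\mathcal A)$ from a regular triangulation with vertices in $\mathcal A$, a stacky fan with the vectors $v_j$ on its rays. $K_0(\mathbb P_\Sigma,\mathbb C)$ is the complexified Grothendieck ring of the toric Deligne–Mumford stack $\mathbb P_\Sigma$ (Borisov–Chen–Smith), isomorphic to $\mathbb C[R_1^{\pm1},\dots,R_n^{\pm1}]$ modulo $\prod_jR_j^{\langle m,v_j\rangle}=1$ ($m\in M$) and $\prod_{j\in J}(1-R_j)=0$ whenever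 $\{v_j:j\in J\}$ do not generate a cone of $\Sigma$. $\mathrm{Box}(\Sigma)$: $v=\sum q^v_jv_j\in N$ with $0\le q^v_j<1$, $q^v_j=0$ unless $v_j$ spans a ray of a fixed maximal cone; $\sigma(v)$ the smallest cone containing $v$; $y^v_j=e^{2\pi iq^v_j}$. $K_0(\mathbb P_\Sigma,\mathbb C)$ is Artinian and is the direct sum of its localizations $(K_0(\mathbb P_\Sigma,\mathbb C))_v$ at the maximal ideals $(R_1-y^v_1,\dots,R_n-y^v_n)$, $v\in\mathrm{Box}(\Sigma)$. $\mathcal R_j$ is the operator of multiplication by $R_j$; on $(K_0)_v$ its spectrum is $\{y^v_j\}$. $B^v_j$ is an open disc of small radius centred at $y^v_j$ not containing $0$, $B^v=B^v_1\times\dots\times B^v_n$. For an analytic function $\phi$ on a neighbourhood of the joint spectrum, $\phi(\mathcal R)$ denotes the usual holomorphic functional calculus of commuting operators (equal to $P(\mathcal R)$ for any polynomial $P$ whose derivatives agree with those of $\phi$ at the spectrum up to the relevant indices). $z_j^a=e^{a(\log|z_j|+i\arg z_j)}$. *)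

theory Defs
  imports "HOL-Analysis.Analysis" "HOL-Library.Poly_Mapping"
begin

text \<open>Lattice N = ('d => int) for a finite type 'd (d = CARD('d)); the set
  A = {v_j} is indexed by a finite type 'a (n = CARD('a)).\<close>

definition pair :: "('d::finite \<Rightarrow> int) \<Rightarrow> ('d \<Rightarrow> int) \<Rightarrow> int" where
  "pair m u = (\<Sum>i\<in>UNIV. m i * u i)"

definition rcone :: "('a \<Rightarrow> ('d::finite \<Rightarrow> int)) \<Rightarrow> 'a set \<Rightarrow> ('d \<Rightarrow> real) set" where
  "rcone v F = {x. \<exists>c::'a \<Rightarrow> real. (\<forall>j\<in>F. c j \<ge> 0) \<and>
                    x = (\<lambda>i. \<Sum>j\<in>F. c j * real_of_int (v j i))}"

definition lin_indep_on :: "('a \<Rightarrow> ('d::finite \<Rightarrow> int)) \<Rightarrow> 'a set \<Rightarrow> bool" where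
  "lin_indep_on v S \<longleftrightarrow> (\<forall>c::'a \<Rightarrow> real.
      (\<forall>i. (\<Sum>j\<in>S. c j * real_of_int (v j i)) = 0) \<longrightarrow> (\<forall>j\<in>S. c j = 0))"

text \<open>The hypotheses on (A, h, Sigma): A generates N, h(v_j)=1 for a homomorphism h,
  T is the set of maximal simplices (as index sets) of a regular triangulation of
  Conv(A) with vertices in A; Sigma consists of the cones rcone v F, F a subset of some S in T.\<close>
definition stacky_setup :: "('a::finite \<Rightarrow> ('d::finite \<Rightarrow> int)) \<Rightarrow> 'a set set \<Rightarrow> bool" where
  "stacky_setup v T \<longleftrightarrow>
     inj v \<and>
     (\<forall>u::'d \<Rightarrow> int. \<exists>a::'a \<Rightarrow> int. u = (\<lambda>i. \<Sum>j\<in>UNIV. a j * v j i)) \<and>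
     (\<exists>h::'d \<Rightarrow> int. \<forall>j. pair h (v j) = 1) \<and>
     (\<forall>S\<in>T. card S = CARD('d) \<and> lin_indep_on v S) \<and>
     (\<Union>S\<in>T. rcone v S) = rcone v UNIV \<and>
     (\<forall>S\<in>T. \<forall>S'\<in>T. rcone v S \<inter> rcone v S' = rcone v (S \<inter> S')) \<and>
     (\<exists>\<omega>::'a \<Rightarrow> real. \<forall>S\<in>T. \<exists>\<psi>::'d \<Rightarrow> real.
         (\<forall>j\<in>S. (\<Sum>i\<in>UNIV. \<psi> i * real_of_int (v j i)) = \<omega> j) \<and>
         (\<forall>j. j \<notin> S \<longrightarrow> (\<Sum>i\<in>UNIV. \<psi> i * real_of_int (v j i)) < \<omega> j))"

definition fan_cones :: "('a \<Rightarrow> ('d::finite \<Rightarrow> int)) \<Rightarrow> 'a set set \<Rightarrow> ('d \<Rightarrow> real) set set" where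
  "fan_cones v T = {rcone v F | F S. S \<in> T \<and> F \<subseteq> S}"

text \<open>Box(Sigma): v = sum q_j v_j in N with 0 <= q_j < 1 and q_j = 0 off a maximal cone.\<close>
definition box_coeffs :: "('a::finite \<Rightarrow> ('d::finite \<Rightarrow> int)) \<Rightarrow> 'a set set \<Rightarrow> ('a \<Rightarrow> real) \<Rightarrow> bool" where
  "box_coeffs v T q \<longleftrightarrow>
     (\<forall>j. 0 \<le> q j \<and> q j < 1) \<and>
     (\<exists>S\<in>T. \<forall>j. j \<notin> S \<longrightarrow> q j = 0) \<and>
     (\<exists>u::'d \<Rightarrow> int. \<forall>i. (\<Sum>j\<in>UNIV. q j * real_of_int (v j i)) = real_of_int (u i))"

definition box_vec :: "('a::finite \<Rightarrow> ('d::finite \<Rightarrow> int)) \<Rightarrow> ('a \<Rightarrow> real) \<Rightarrow> ('d \<Rightarrow> real)" where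
  "box_vec v q = (\<lambda>i. \<Sum>j\<in>UNIV. q j * real_of_int (v j i))"

definition min_cone :: "('a \<Rightarrow> ('d::finite \<Rightarrow> int)) \<Rightarrow> 'a set set \<Rightarrow> ('d \<Rightarrow> real) \<Rightarrow> ('d \<Rightarrow> real) set" where
  "min_cone v T x = \<Inter>{C \<in> fan_cones v T. x \<in> C}"

definition on_ray :: "('a \<Rightarrow> ('d::finite \<Rightarrow> int)) \<Rightarrow> 'a \<Rightarrow> 'a set \<Rightarrow> bool" where
  "on_ray v j F \<longleftrightarrow> (\<exists>k\<in>F. \<exists>c::real. c > 0 \<and> (\<forall>i. real_of_int (v j i) = c * real_of_int (v k i)))"

definition yv :: "('a \<Rightarrow> real) \<Rightarrow> 'a \<Rightarrow> complex" where
  "yv q j = exp (2 * of_real pi * \<i> * of_real (q j))"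

text \<open>Laurent polynomial ring C[R_j^{+-1} : j in 'a], as finitely supported functions
  from exponent vectors to coefficients (multiplication = convolution).\<close>
type_synonym 'a lpoly = "('a \<Rightarrow>\<^sub>0 int) \<Rightarrow>\<^sub>0 complex"

definition lmono :: "('a \<Rightarrow>\<^sub>0 int) \<Rightarrow> 'a lpoly" where
  "lmono e = Poly_Mapping.single e 1"

definition lconst :: "complex \<Rightarrow> 'a lpoly" where
  "lconst c = Poly_Mapping.single 0 c"

definition Rvar :: "'a \<Rightarrow> 'a lpoly" where
  "Rvar j = lmono (Poly_Mapping.single j 1)"

definition gen_ideal :: "'a lpoly set \<Rightarrow> 'a lpoly set" where
  "gen_ideal G = {x. \<exists>F c. finite F \<and> F \<subseteq> G \<and> x = (\<Sum>g\<in>F. c g * g)}"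

definition K0_rels :: "('a::finite \<Rightarrow> ('d::finite \<Rightarrow> int)) \<Rightarrow> 'a set set \<Rightarrow> 'a lpoly set" where
  "K0_rels v T =
     {lmono (\<Sum>j\<in>UNIV. Poly_Mapping.single j (pair m (v j))) - 1 | m. True} \<union>
     {(\<Prod>j\<in>J. (1 - Rvar j)) | J. \<not> (\<exists>S\<in>T. J \<subseteq> S)}"

definition K0_max_ideal :: "('a::finite \<Rightarrow> ('d::finite \<Rightarrow> int)) \<Rightarrow> 'a set set \<Rightarrow> ('a \<Rightarrow> complex) \<Rightarrow> 'a lpoly set" where
  "K0_max_ideal v T y = gen_ideal (K0_rels v T \<union> {Rvar j - lconst (y j) | j. True})"

text \<open>The class of x in K_0 maps to 0 in the localization (K_0)_v, i.e. u*x = 0 in K_0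
  for some u outside the maximal ideal.\<close>
definition loc_zero :: "('a::finite \<Rightarrow> ('d::finite \<Rightarrow> int)) \<Rightarrow> 'a set set \<Rightarrow> ('a \<Rightarrow> complex) \<Rightarrow> 'a lpoly \<Rightarrow> bool" where
  "loc_zero v T y x \<longleftrightarrow> (\<exists>u. u \<notin> K0_max_ideal v T y \<and> u * x \<in> gen_ideal (K0_rels v T))"

definition taylor_prod :: "('a::finite \<Rightarrow> complex \<Rightarrow> complex) \<Rightarrow> ('a \<Rightarrow> complex) \<Rightarrow> nat \<Rightarrow> 'a lpoly" where
  "taylor_prod g y k = (\<Prod>j\<in>UNIV. \<Sum>a<k.
       lconst ((deriv ^^ a) (g j) (y j) / of_nat (fact a)) * (Rvar j - lconst (y j)) ^ a)"

text \<open>The operator phi(R) on (K_0)_v given by holomorphic functional calculus is zero: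
  since K_0 is Artinian, phi(R) on (K_0)_v is multiplication by the Taylor polynomial of
  phi at y^v of any sufficiently high order; an operator of multiplication by an
  element of the localization is zero iff that element is zero.\<close>
definition fc_op_zero :: "('a::finite \<Rightarrow> ('d::finite \<Rightarrow> int)) \<Rightarrow> 'a set set \<Rightarrow> ('a \<Rightarrow> complex) \<Rightarrow> ('a \<Rightarrow> complex \<Rightarrow> complex) \<Rightarrow> bool" where
  "fc_op_zero v T y g \<longleftrightarrow> (\<forall>\<^sub>F k in sequentially. loc_zero v T y (taylor_prod g y k))"

end

theory Submission imports Defs begin

text \<open>Write \<open>y = y\<^sup>v\<close>, \<open>\<lambda>\<^sub>j = log\<^sub>j y\<^sub>j / 2\<pi>i\<close>, \<open>P = {j. q\<^sub>j \<noteq> 0}\<close> and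
  \<open>Z = {j. q\<^sub>j = 0, \<lambda>\<^sub>j \<notin> \<nat>}\<close>. For \<open>j \<in> Z\<close> we have \<open>y\<^sub>j = 1\<close>, so \<open>\<lambda>\<^sub>j\<close> is a negative
  integer and the factor \<open>1/\<Gamma>(\<lambda>\<^sub>j + 1)\<close> of \<open>\<phi>\<close> vanishes at \<open>y\<close>; hence every Taylor
  polynomial of \<open>\<phi>\<close> at \<open>y\<close> is divisible by \<open>\<Prod>\<^sub>j\<^sub>\<in>\<^sub>Z (1 - R\<^sub>j)\<close>. The cone spanned by
  \<open>P \<union> Z\<close> contains \<open>\<sigma>(v)\<close> and all \<open>v\<^sub>j\<close> with \<open>\<lambda>\<^sub>j \<notin> \<nat>\<close>, so by hypothesis it is not a
  cone of \<open>\<Sigma>\<close> and \<open>\<Prod>\<^sub>j\<^sub>\<in>\<^sub>P\<^sub>\<union>\<^sub>Z (1 - R\<^sub>j) = 0\<close> in \<open>K\<^sub>0\<close>. Since \<open>y\<^sub>j \<noteq> 1\<close> for \<open>j \<in> P\<close>, the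
  factor \<open>\<Prod>\<^sub>j\<^sub>\<in>\<^sub>P (1 - R\<^sub>j)\<close> is a unit in the localization at \<open>y\<close>, so the Taylor
  polynomials vanish there. Neither the fan axioms \<open>stacky_setup\<close> nor \<open>z\<close> enter the
  argument.\<close>

definition mono_eval :: "('a::finite \<Rightarrow> complex) \<Rightarrow> ('a \<Rightarrow>\<^sub>0 int) \<Rightarrow> complex" where
  "mono_eval y e = (\<Prod>j\<in>UNIV. y j powi Poly_Mapping.lookup e j)"

definition lpoly_eval :: "('a::finite \<Rightarrow> complex) \<Rightarrow> 'a lpoly \<Rightarrow> complex" where
  "lpoly_eval y p = (\<Sum>e\<in>Poly_Mapping.keys p. Poly_Mapping.lookup p e * mono_eval y e)"

lemma mono_eval_zero [simp]: "mono_eval y 0 = 1"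
  by (simp add: mono_eval_def)

lemma mono_eval_add:
  assumes "\<forall>j. y j \<noteq> 0"
  shows "mono_eval y (e + e') = mono_eval y e * mono_eval y e'"
  using assms by (simp add: mono_eval_def lookup_add power_int_add prod.distrib)

lemma lpoly_eval_superset:
  assumes "finite A" "Poly_Mapping.keys p \<subseteq> A"
  shows "lpoly_eval y p = (\<Sum>e\<in>A. Poly_Mapping.lookup p e * mono_eval y e)"
  unfolding lpoly_eval_def
  by (rule sum.mono_neutral_left) (use assms in \<open>auto simp: in_keys_iff\<close>)

lemma lpoly_eval_zero [simp]: "lpoly_eval y 0 = 0"
  by (simp add: lpoly_eval_def)

lemma lpoly_eval_single: "lpoly_eval y (Poly_Mapping.single e c) = c * mono_eval y e"
  by (subst lpoly_eval_superset[of "{e}"]) auto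

lemma lpoly_eval_one [simp]: "lpoly_eval y 1 = 1"
  using lpoly_eval_single[of y 0 1] by simp

lemma lpoly_eval_lconst [simp]: "lpoly_eval y (lconst c) = c"
  by (simp add: lconst_def lpoly_eval_single)

lemma lpoly_eval_Rvar [simp]: "lpoly_eval y (Rvar j) = y j"
proof -
  have "lpoly_eval y (Rvar j) = (\<Prod>i\<in>UNIV. y i powi (if i = j then 1 else 0))"
    by (simp add: Rvar_def lmono_def lpoly_eval_single mono_eval_def lookup_single when_def)
  also have "\<dots> = (\<Prod>i\<in>UNIV. if i = j then y i else 1)"
    by (rule prod.cong) auto
  finally show ?thesis by simp
qed

lemma lpoly_eval_add: "lpoly_eval y (p + p') = lpoly_eval y p + lpoly_eval y p'"
proof -
  let ?A = "Poly_Mapping.keys p \<union> Poly_Mapping.keys p' \<union> Poly_Mapping.keys (p + p')"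
  have "lpoly_eval y (p + p') = (\<Sum>e\<in>?A. Poly_Mapping.lookup (p + p') e * mono_eval y e)"
    by (rule lpoly_eval_superset) auto
  also have "\<dots> = (\<Sum>e\<in>?A. Poly_Mapping.lookup p e * mono_eval y e)
                + (\<Sum>e\<in>?A. Poly_Mapping.lookup p' e * mono_eval y e)"
    by (simp add: lookup_add distrib_right sum.distrib)
  also have "\<dots> = lpoly_eval y p + lpoly_eval y p'"
    by (subst (1 2) lpoly_eval_superset[of ?A]) auto
  finally show ?thesis .
qed

lemma lpoly_eval_uminus: "lpoly_eval y (- p) = - lpoly_eval y p"
  by (simp add: lpoly_eval_def keys_minus sum_negf)

lemma lpoly_eval_diff: "lpoly_eval y (p - p') = lpoly_eval y p - lpoly_eval y p'"
  using lpoly_eval_add[of y p "- p'"] by (simp add: lpoly_eval_uminus)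

lemma lpoly_eval_sum: "lpoly_eval y (sum f A) = (\<Sum>a\<in>A. lpoly_eval y (f a))"
  by (induction A rule: infinite_finite_induct) (auto simp: lpoly_eval_add)

lemma poly_mapping_sum_single_keys:
  "p = (\<Sum>e\<in>Poly_Mapping.keys p. Poly_Mapping.single e (Poly_Mapping.lookup p e))"
  by (rule poly_mapping_eqI) (auto simp: lookup_sum lookup_single when_def in_keys_iff)

lemma lpoly_eval_mult:
  assumes "\<forall>j. y j \<noteq> 0"
  shows "lpoly_eval y (p * p') = lpoly_eval y p * lpoly_eval y p'"
proof -
  let ?c = "Poly_Mapping.lookup p" and ?c' = "Poly_Mapping.lookup p'"
  let ?K = "Poly_Mapping.keys p" and ?K' = "Poly_Mapping.keys p'"
  have "p * p' = (\<Sum>e\<in>?K. Poly_Mapping.single e (?c e)) * (\<Sum>e'\<in>?K'. Poly_Mapping.single e' (?c' e'))"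
    by (subst (1) poly_mapping_sum_single_keys[of p], subst (1) poly_mapping_sum_single_keys[of p']) (rule refl)
  also have "\<dots> = (\<Sum>e\<in>?K. \<Sum>e'\<in>?K'. Poly_Mapping.single (e + e') (?c e * ?c' e'))"
    by (simp add: sum_product mult_single)
  finally have "lpoly_eval y (p * p') = (\<Sum>e\<in>?K. \<Sum>e'\<in>?K'. ?c e * ?c' e' * mono_eval y (e + e'))"
    by (simp add: lpoly_eval_sum lpoly_eval_single)
  also have "\<dots> = (\<Sum>e\<in>?K. \<Sum>e'\<in>?K'. (?c e * mono_eval y e) * (?c' e' * mono_eval y e'))"
    using assms by (simp add: mono_eval_add mult_ac)
  finally show ?thesis
    by (simp add: lpoly_eval_def sum_product)
qed

lemma lpoly_eval_prod:
  assumes "\<forall>j. y j \<noteq> 0"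
  shows "lpoly_eval y (prod f A) = (\<Prod>a\<in>A. lpoly_eval y (f a))"
  by (induction A rule: infinite_finite_induct) (auto simp: lpoly_eval_mult[OF assms])

lemma lpoly_eval_gen_ideal:
  assumes "\<forall>j. y j \<noteq> 0" "\<forall>g\<in>G. lpoly_eval y g = 0" "x \<in> gen_ideal G"
  shows "lpoly_eval y x = 0"
  using assms by (auto simp: gen_ideal_def lpoly_eval_sum lpoly_eval_mult subset_iff)

lemma mult_mem_gen_ideal: "g \<in> G \<Longrightarrow> w * g \<in> gen_ideal G"
  unfolding gen_ideal_def by (intro CollectI exI[of _ "{g}"] exI[of _ "\<lambda>_. w"]) auto

lemma not_mem_K0_max_ideal:
  assumes "\<forall>j. y j \<noteq> 0" "\<forall>r\<in>K0_rels v T. lpoly_eval y r = 0" "lpoly_eval y u \<noteq> 0"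
  shows "u \<notin> K0_max_ideal v T y"
proof -
  have "\<forall>g\<in>K0_rels v T \<union> {Rvar j - lconst (y j) | j. True}. lpoly_eval y g = 0"
    using assms(2) by (auto simp: lpoly_eval_diff)
  then show ?thesis
    using assms(1,3) lpoly_eval_gen_ideal unfolding K0_max_ideal_def by blast
qed

lemma loc_zero_if_dvd_prod_one_minus_Rvar:
  assumes "\<forall>j. y j \<noteq> 0" "\<forall>r\<in>K0_rels v T. lpoly_eval y r = 0"
    and "\<forall>j\<in>P. y j \<noteq> 1" and "\<not> (\<exists>S\<in>T. P \<union> Z \<subseteq> S)"
    and "(\<Prod>j\<in>Z. 1 - Rvar j) dvd x"
  shows "loc_zero v T y x"
proof -
  from assms(5) obtain w where "x = (\<Prod>j\<in>Z. 1 - Rvar j) * w" ..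
  define u where "u = (\<Prod>j\<in>P - Z. 1 - Rvar j :: 'a lpoly)"
  have "lpoly_eval y u = (\<Prod>j\<in>P - Z. 1 - y j)"
    using assms(1) by (simp add: u_def lpoly_eval_prod lpoly_eval_diff)
  also have "\<dots> \<noteq> 0"
    using assms(3) by simp
  finally have "u \<notin> K0_max_ideal v T y"
    using assms(1,2) by (intro not_mem_K0_max_ideal)
  moreover have "u * x = w * (\<Prod>j\<in>P \<union> Z. 1 - Rvar j)"
    using \<open>x = (\<Prod>j\<in>Z. 1 - Rvar j) * w\<close> prod.subset_diff[of Z "P \<union> Z" "\<lambda>j. 1 - Rvar j"]
    by (simp add: u_def Un_Diff mult_ac)
  moreover have "(\<Prod>j\<in>P \<union> Z. 1 - Rvar j) \<in> K0_rels v T"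
    using assms(4) unfolding K0_rels_def by blast
  ultimately show ?thesis
    unfolding loc_zero_def by (metis mult_mem_gen_ideal)
qed

lemma yv_nonzero: "yv q j \<noteq> 0"
  by (simp add: yv_def)

lemma yv_eq_1_iff:
  assumes "0 \<le> q j" "q j < 1"
  shows "yv q j = 1 \<longleftrightarrow> q j = 0"
proof
  assume "yv q j = 1"
  then have "exp (\<i> * complex_of_real (2 * pi * q j)) = 1"
    by (simp add: yv_def mult_ac)
  show "q j = 0"
  proof (rule ccontr)
    assume "q j \<noteq> 0"
    with assms have "0 < 2 * pi * q j" "2 * pi * q j < 2 * pi"
      by auto
    with exp_i_ne_1 \<open>exp (\<i> * complex_of_real (2 * pi * q j)) = 1\<close> show False
      by blast
  qed
qed (simp add: yv_def)

lemma mono_eval_yv: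
  "mono_eval (yv q) e = exp (2 * of_real pi * \<i> * of_real (\<Sum>k\<in>UNIV. of_int (Poly_Mapping.lookup e k) * q k))"
proof -
  have "mono_eval (yv q) e
      = (\<Prod>k\<in>UNIV. exp (of_int (Poly_Mapping.lookup e k) * (2 * of_real pi * \<i> * of_real (q k))))"
    by (simp add: mono_eval_def yv_def exp_power_int)
  also have "\<dots> = exp (\<Sum>k\<in>UNIV. of_int (Poly_Mapping.lookup e k) * (2 * of_real pi * \<i> * of_real (q k)))"
    by (simp add: exp_sum)
  finally show ?thesis
    by (simp add: sum_distrib_left mult_ac)
qed

lemma mono_eval_yv_pair_eq_1:
  fixes v :: "'a::finite \<Rightarrow> ('d::finite \<Rightarrow> int)"
  assumes "\<forall>i. (\<Sum>j\<in>UNIV. q j * real_of_int (v j i)) = real_of_int (u i)"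
  shows "mono_eval (yv q) (\<Sum>j\<in>UNIV. Poly_Mapping.single j (pair m (v j))) = 1"
proof -
  have "(\<Sum>k\<in>UNIV. real_of_int (pair m (v k)) * q k)
      = (\<Sum>i\<in>UNIV. real_of_int (m i) * (\<Sum>k\<in>UNIV. q k * real_of_int (v k i)))"
    unfolding pair_def of_int_sum sum_distrib_left sum_distrib_right
    by (subst sum.swap) (simp add: mult_ac)
  also have "\<dots> = of_int (pair m u)"
    by (simp add: assms pair_def)
  finally have exponent: "(\<Sum>k\<in>UNIV. real_of_int (pair m (v k)) * q k) = of_int (pair m u)" .
  have exponent_vector: "Poly_Mapping.lookup (\<Sum>j\<in>UNIV. Poly_Mapping.single j (pair m (v j))) k = pair m (v k)" for k
    by (simp add: lookup_sum lookup_single when_def)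
  show ?thesis
    unfolding mono_eval_yv exponent_vector exponent using exp_2pi_1_int[of "pair m u"] by (simp add: mult_ac)
qed

lemma K0_rels_vanish_at_yv:
  assumes "box_coeffs v T q"
  shows "\<forall>r\<in>K0_rels v T. lpoly_eval (yv q) r = 0"
proof
  from assms obtain S0 u where "S0 \<in> T" "\<forall>j. j \<notin> S0 \<longrightarrow> q j = 0"
    and u: "\<forall>i. (\<Sum>j\<in>UNIV. q j * real_of_int (v j i)) = real_of_int (u i)"
    unfolding box_coeffs_def by blast
  fix r assume "r \<in> K0_rels v T"
  then consider m where "r = lmono (\<Sum>j\<in>UNIV. Poly_Mapping.single j (pair m (v j))) - 1"
    | J where "r = (\<Prod>j\<in>J. 1 - Rvar j)" "\<not> (\<exists>S\<in>T. J \<subseteq> S)"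
    unfolding K0_rels_def by blast
  then show "lpoly_eval (yv q) r = 0"
  proof cases
    case 1
    then show ?thesis
      using mono_eval_yv_pair_eq_1[OF u] by (simp add: lpoly_eval_diff lmono_def lpoly_eval_single)
  next
    case 2
    with \<open>S0 \<in> T\<close> obtain j where "j \<in> J" "q j = 0"
      using \<open>\<forall>j. j \<notin> S0 \<longrightarrow> q j = 0\<close> by blast
    then have "(\<Prod>j\<in>J. 1 - yv q j) = 0"
      by (intro prod_zero) (auto simp: yv_def intro!: bexI[of _ j])
    with 2 show ?thesis
      by (simp add: lpoly_eval_prod yv_nonzero lpoly_eval_diff)
  qed
qed

lemma rGamma_eq_0_if_exp_eq_1:
  assumes "exp w = 1" "w / (2 * of_real pi * \<i>) \<notin> \<nat>"
  shows "rGamma (w / (2 * of_real pi * \<i>) + 1) = 0"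
proof -
  obtain n :: int where "w = of_int (2 * n) * pi * \<i>"
    using assms(1) exp_eq[of w 0] by auto
  then have n: "w / (2 * of_real pi * \<i>) = of_int n"
    by (simp add: field_simps)
  have "n < 0"
  proof (rule ccontr)
    assume "\<not> n < 0"
    then have "w / (2 * of_real pi * \<i>) = of_nat (nat n)"
      unfolding n by simp
    with assms(2) show False
      by simp
  qed
  then have "w / (2 * of_real pi * \<i>) + 1 \<in> \<int>\<^sub>\<le>\<^sub>0"
    unfolding n using of_int_in_nonpos_Ints_iff[of "n + 1"] by simp
  then show ?thesis
    by (rule rGamma_nonpos_Int)
qed

lemma sum_powers_factor_if_constant_zero:
  fixes x :: "'b::comm_ring_1"
  assumes "c 0 = 0"
  shows "(\<Sum>a<k. c a * x ^ a) = x * (\<Sum>a<k. c a * x ^ (a - 1))"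
  unfolding sum_distrib_left
proof (rule sum.cong)
  show "c a * x ^ a = x * (c a * x ^ (a - 1))" for a
    using assms by (cases a) (simp_all add: mult_ac)
qed simp

lemma lconst_0 [simp]: "lconst 0 = 0" and lconst_1 [simp]: "lconst 1 = 1"
  by (simp_all add: lconst_def)

lemma taylor_prod_dvd:
  assumes "\<forall>j\<in>Z. y j = 1 \<and> g j 1 = 0"
  shows "(\<Prod>j\<in>Z. 1 - Rvar j) dvd taylor_prod g y k"
proof -
  define t where "t j = (\<Sum>a<k. lconst ((deriv ^^ a) (g j) (y j) / of_nat (fact a)) * (Rvar j - lconst (y j)) ^ a)" for j
  define s where "s j = - (\<Sum>a<k. lconst ((deriv ^^ a) (g j) 1 / of_nat (fact a)) * (Rvar j - 1) ^ (a - 1))" for j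
  have s: "\<forall>j\<in>Z. t j = (1 - Rvar j) * s j"
  proof
    fix j assume "j \<in> Z"
    then have "t j = (Rvar j - 1) * (- s j)"
      unfolding t_def s_def using assms by (simp add: sum_powers_factor_if_constant_zero)
    then show "t j = (1 - Rvar j) * s j"
      by (simp add: algebra_simps)
  qed
  have "taylor_prod g y k = (\<Prod>j\<in>Z. t j) * (\<Prod>j\<in>UNIV - Z. t j)"
    unfolding taylor_prod_def t_def by (simp add: prod.subset_diff[of Z UNIV] mult.commute)
  also have "\<dots> = (\<Prod>j\<in>Z. 1 - Rvar j) * ((\<Prod>j\<in>Z. s j) * (\<Prod>j\<in>UNIV - Z. t j))"
    using s by (simp add: prod.distrib mult.assoc)
  finally show ?thesis
    by (rule dvdI)
qed

lemma min_cone_box_vec_subset: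
  assumes "S \<in> T" "F \<subseteq> S" "{j. q j \<noteq> 0} \<subseteq> F" "\<forall>j. 0 \<le> q j"
  shows "min_cone v T (box_vec v q) \<subseteq> rcone v F"
proof -
  have "box_vec v q = (\<lambda>i. \<Sum>j\<in>F. q j * real_of_int (v j i))"
    unfolding box_vec_def using assms(3) by (intro ext sum.mono_neutral_right) auto
  then have "box_vec v q \<in> rcone v F"
    unfolding rcone_def using assms(4) by blast
  moreover have "rcone v F \<in> fan_cones v T"
    unfolding fan_cones_def using assms(1,2) by blast
  ultimately show ?thesis
    unfolding min_cone_def by blast
qed

lemma on_ray_self: "j \<in> F \<Longrightarrow> on_ray v j F"
  unfolding on_ray_def by (intro bexI[of _ j] exI[of _ 1]) auto

lemma not_subset_simplex_if_no_cone:
  assumes "\<not> (\<exists>S\<in>T. \<exists>F\<subseteq>S. min_cone v T (box_vec v q) \<subseteq> rcone v F \<and> (\<forall>j. Q j \<longrightarrow> on_ray v j F))"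
    and "\<forall>j. 0 \<le> q j"
  shows "\<not> (\<exists>S\<in>T. {j. q j \<noteq> 0} \<union> {j. Q j} \<subseteq> S)"
proof
  assume "\<exists>S\<in>T. {j. q j \<noteq> 0} \<union> {j. Q j} \<subseteq> S"
  then obtain S where "S \<in> T" "{j. q j \<noteq> 0} \<union> {j. Q j} \<subseteq> S" by blast
  moreover from this have "min_cone v T (box_vec v q) \<subseteq> rcone v ({j. q j \<noteq> 0} \<union> {j. Q j})"
    using assms(2) by (intro min_cone_box_vec_subset) auto
  moreover have "\<forall>j. Q j \<longrightarrow> on_ray v j ({j. q j \<noteq> 0} \<union> {j. Q j})"
    by (auto intro: on_ray_self)
  ultimately show False
    using assms(1) by blast
qed

theorem proposition3p2:
  fixes v :: "'a::finite \<Rightarrow> ('d::finite \<Rightarrow> int)"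
    and T :: "'a set set"
    and q :: "'a \<Rightarrow> real"
    and rad :: "'a \<Rightarrow> real"
    and L :: "'a \<Rightarrow> complex \<Rightarrow> complex"
    and z lz :: "'a \<Rightarrow> complex"
  assumes hsetup: "stacky_setup v T"
    and box: "box_coeffs v T q"
    and rho: "\<forall>j. rad j > 0 \<and> 0 \<notin> ball (yv q j) (rad j)"
    and logs: "\<forall>j. continuous_on (ball (yv q j) (rad j)) (L j) \<and>
                   (\<forall>w\<in>ball (yv q j) (rad j). exp (L j w) = w)"
    and zlog: "\<forall>j. exp (lz j) = z j"
  shows "\<not> (\<exists>S\<in>T. \<exists>F\<subseteq>S. min_cone v T (box_vec v q) \<subseteq> rcone v F \<and>
              (\<forall>j. L j (yv q j) / (2 * of_real pi * \<i>) \<notin> \<nat> \<longrightarrow> on_ray v j F))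
         \<longrightarrow> fc_op_zero v T (yv q)
               (\<lambda>j r. exp ((L j r / (2 * of_real pi * \<i>)) * lz j)
                      * rGamma (L j r / (2 * of_real pi * \<i>) + 1))"
proof
  assume no_cone: "\<not> (\<exists>S\<in>T. \<exists>F\<subseteq>S. min_cone v T (box_vec v q) \<subseteq> rcone v F \<and>
              (\<forall>j. L j (yv q j) / (2 * of_real pi * \<i>) \<notin> \<nat> \<longrightarrow> on_ray v j F))"
  define g where "g = (\<lambda>j r. exp ((L j r / (2 * of_real pi * \<i>)) * lz j)
                      * rGamma (L j r / (2 * of_real pi * \<i>) + 1))"
  define P where "P = {j. q j \<noteq> 0}"
  define Z where "Z = {j. L j (yv q j) / (2 * of_real pi * \<i>) \<notin> \<nat>} - P"
  have q_range: "\<forall>j. 0 \<le> q j \<and> q j < 1"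
    using box unfolding box_coeffs_def by blast
  have "P \<union> Z = {j. q j \<noteq> 0} \<union> {j. L j (yv q j) / (2 * of_real pi * \<i>) \<notin> \<nat>}"
    by (auto simp: P_def Z_def)
  then have not_face: "\<not> (\<exists>S\<in>T. P \<union> Z \<subseteq> S)"
    using not_subset_simplex_if_no_cone[OF no_cone] q_range by simp
  have "yv q j = 1 \<and> exp (L j 1) = 1 \<and> L j 1 / (2 * of_real pi * \<i>) \<notin> \<nat>" if "j \<in> Z" for j
    using that rho logs by (auto simp: Z_def P_def yv_def)
  then have Z_zero: "\<forall>j\<in>Z. yv q j = 1 \<and> g j 1 = 0"
    by (simp add: g_def rGamma_eq_0_if_exp_eq_1)
  have P_ne_1: "\<forall>j\<in>P. yv q j \<noteq> 1"
    using q_range by (simp add: P_def yv_eq_1_iff)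
  have "loc_zero v T (yv q) (taylor_prod g (yv q) k)" for k
    using P_ne_1 not_face taylor_prod_dvd[of Z "yv q" g k, OF Z_zero]
    by (intro loc_zero_if_dvd_prod_one_minus_Rvar K0_rels_vanish_at_yv[OF box]) (auto simp: yv_nonzero)
  then show "fc_op_zero v T (yv q) (\<lambda>j r. exp ((L j r / (2 * of_real pi * \<i>)) * lz j)
                      * rGamma (L j r / (2 * of_real pi * \<i>) + 1))"
    unfolding fc_op_zero_def g_def by (simp add: always_eventually)
qed

end
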